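(* Let $n$ be an even positive integer and let $\mathbb{F}$ be a field with $\operatorname{char}(\mathbb{F})\neq 2$ and $|\mathbb{F}|\geq n^2+1$. Let $Q_n$ denote the set of all $n\times n$ skew-symmetric matrices over $\mathbb{F}$. Let $\phi,\psi:Q_n\to Q_n$ be maps such that $\psi$ is surjective, $\psi(0)=0$, and $$\det(\phi(x)+\psi(y))=\det(x+y)\qquad\text{for all } x,y\in Q_n.$$ Then $\phi=\psi$, and $\psi$ is a bijective linear map satisfying $\det(\psi(x))=\det(x)$ for all $x\in Q_n$.
   Context: A matrix $x$ is skew-symmetric if $x^t=-x$. *)

theory Defs
  imports "HOL-Analysis.Analysis"
begin

definition skew_symmetric :: "'a::field^'n^'n \<Rightarrow> bool" where
  "skew_symmetric x \<longleftrightarrow> transpose x = - x"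

definition Qn :: "('a::field^'n^'n) set" where
  "Qn = {x. skew_symmetric x}"

definition mat_smult :: "'a::field \<Rightarrow> 'a^'n^'m \<Rightarrow> 'a^'n^'m" where
  "mat_smult c x = (\<chi> i j. c * x $ i $ j)"

definition linear_on_Qn :: "('a::field^'n^'n \<Rightarrow> 'a^'n^'n) \<Rightarrow> bool" where
  "linear_on_Qn f \<longleftrightarrow>
     (\<forall>x\<in>Qn. \<forall>y\<in>Qn. f (x + y) = f x + f y) \<and>
     (\<forall>c. \<forall>x\<in>Qn. f (mat_smult c x) = mat_smult c (f x))"

end

theory Submission
  imports Defs "HOL-Computational_Algebra.Polynomial"
begin

text \<open>
  Let \<open>psi_inv\<close> be the inverse of \<open>\<psi>\<close> on \<open>Qn\<close>, so that
  \<open>det (\<phi> x + z) = det (x + psi_inv z)\<close>. The derivative of \<open>det\<close> at an invertible \<open>B\<close> in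
  direction \<open>A\<close> is \<open>det B tr (B\<^sup>-\<^sup>1 A)\<close>, and the trace pairing with the invertible
  skew-symmetric matrices is non-degenerate on \<open>Qn\<close>. Hence a skew-symmetric \<open>A\<close> is determined
  by the function \<open>z \<mapsto> det (A + z)\<close>, and every entry of a skew-symmetric \<open>W\<close> is a fixed
  linear combination of finitely many determinants \<open>det (x\<^sub>k + W)\<close>. The latter makes the
  entries of \<open>psi_inv (u + t w)\<close> polynomials of degree at most \<open>n\<close> in \<open>t\<close>. Comparing
  \<open>det (y + psi_inv (u + t w))\<close> with \<open>det (\<phi> y + u + t w)\<close> as polynomials in \<open>t\<close> (this is
  where \<open>n\<^sup>2 < |F|\<close> is used) shows that \<open>psi_inv\<close> is affine on every line whose direction
  is invertible; a bilinearity argument extends this to planes, so \<open>psi_inv\<close> and \<open>\<psi>\<close> are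
  linear. Finally \<open>det (\<phi> x - \<psi> x + z) = det (\<phi> 0 + z)\<close> for all \<open>z\<close> gives
  \<open>\<phi> x = \<psi> x + \<phi> 0\<close>, and \<open>\<phi> 0 = 0\<close> by homogeneity of \<open>psi_inv\<close>.
\<close>

section \<open>Polynomial matrices and the derivative of the determinant\<close>

definition eval_poly_mat :: "'a::comm_ring_1 poly^'n^'m \<Rightarrow> 'a \<Rightarrow> 'a^'n^'m" where
  "eval_poly_mat M x = (\<chi> i j. poly (M$i$j) x)"

definition pencil :: "'a::comm_ring_1^'n^'m \<Rightarrow> 'a^'n^'m \<Rightarrow> 'a poly^'n^'m" where
  "pencil A B = (\<chi> i j. [:B$i$j, A$i$j:])"

definition const_poly_mat :: "'a::comm_ring_1^'n^'m \<Rightarrow> 'a poly^'n^'m" where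
  "const_poly_mat M = (\<chi> i j. [:M$i$j:])"

text \<open>The coefficient of \<open>t\<close> in \<open>det (B + t A)\<close>, i.e. the derivative of \<open>det\<close> at \<open>B\<close>
  in direction \<open>A\<close>.\<close>
definition det_deriv :: "'a::comm_ring_1^'n^'n \<Rightarrow> 'a^'n^'n \<Rightarrow> 'a" where
  "det_deriv A B = (\<Sum>p\<in>{p. p permutes (UNIV::'n set)}. of_int (sign p) *
      (\<Sum>i\<in>UNIV. A$i$p i * (\<Prod>k\<in>UNIV-{i}. B$k$p k)))"

lemma poly_det: "poly (det M) x = det (eval_poly_mat M x)"
  by (simp add: det_def eval_poly_mat_def poly_sum poly_prod)

lemma degree_det_le:
  fixes M :: "'a::comm_ring_1 poly^'n^'n"
  assumes "\<And>i j. degree (M$i$j) \<le> d"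
  shows "degree (det M) \<le> CARD('n) * d"
  unfolding det_def
proof (rule degree_sum_le)
  fix p assume "p \<in> {p. p permutes (UNIV::'n set)}"
  have "degree (\<Prod>i\<in>UNIV. M$i$p i) \<le> (\<Sum>i\<in>UNIV. degree (M$i$p i))"
    using degree_prod_sum_le[of UNIV "\<lambda>i. M$i$p i"] by (simp add: o_def)
  also have "\<dots> \<le> CARD('n) * d"
    using sum_mono[of UNIV "\<lambda>i. degree (M$i$p i)" "\<lambda>_. d"] assms by simp
  finally show "degree (of_int (sign p) * (\<Prod>i\<in>UNIV. M$i$p i)) \<le> CARD('n) * d"
    by (simp add: of_int_poly) (rule order.trans[OF degree_smult_le])
qed simp

lemma det_scale:
  fixes A :: "'a::comm_ring_1^'n^'n"
  shows "det (\<chi> i j. c * A$i$j) = c ^ CARD('n) * det A"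
  using det_rows_mul[of "\<lambda>_. c" "\<lambda>i. A$i"] by (simp add: vector_scalar_mult_def)

lemma det_mat_smult: "det (mat_smult c A) = c ^ CARD('n) * det (A::'a::field^'n^'n)"
  unfolding mat_smult_def by (rule det_scale)

lemma mat_smult_0: "mat_smult 0 M = 0"
  and mat_smult_1: "mat_smult 1 M = M"
  and mat_smult_mat_smult: "mat_smult a (mat_smult b M) = mat_smult (a * b) M"
  by (simp_all add: mat_smult_def vec_eq_iff algebra_simps)

lemma coeffs_prod_linear_factors:
  fixes a b :: "'i \<Rightarrow> 'a::comm_ring_1"
  assumes "finite S"
  shows "coeff (\<Prod>i\<in>S. [:b i, a i:]) 1 = (\<Sum>i\<in>S. a i * (\<Prod>k\<in>S-{i}. b k))"
    and "coeff (\<Prod>i\<in>S. [:b i, a i:]) (card S) = (\<Prod>i\<in>S. a i)"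
proof -
  have "coeff (\<Prod>i\<in>S. [:b i, a i:]) 0 = (\<Prod>i\<in>S. b i) \<and>
        coeff (\<Prod>i\<in>S. [:b i, a i:]) 1 = (\<Sum>i\<in>S. a i * (\<Prod>k\<in>S-{i}. b k)) \<and>
        degree (\<Prod>i\<in>S. [:b i, a i:]) \<le> card S \<and>
        coeff (\<Prod>i\<in>S. [:b i, a i:]) (card S) = (\<Prod>i\<in>S. a i)"
    using assms
  proof (induction S rule: finite_induct)
    case (insert x S)
    let ?P = "\<Prod>i\<in>S. [:b i, a i:]"
    have split: "(\<Prod>i\<in>insert x S. [:b i, a i:]) = smult (b x) ?P + pCons 0 (smult (a x) ?P)"
      using insert by (simp add: mult_pCons_left)
    have "(\<Sum>i\<in>S. a i * (\<Prod>k\<in>insert x S-{i}. b k)) = b x * (\<Sum>i\<in>S. a i * (\<Prod>k\<in>S-{i}. b k))"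
      unfolding sum_distrib_left
    proof (rule sum.cong)
      fix i assume "i \<in> S"
      then have "insert x S - {i} = insert x (S - {i})" "x \<notin> S - {i}" using insert by auto
      then show "a i * (\<Prod>k\<in>insert x S-{i}. b k) = b x * (a i * (\<Prod>k\<in>S-{i}. b k))"
        using insert by (simp add: ac_simps)
    qed simp
    moreover have "insert x S - {x} = S" using insert by auto
    ultimately have c1: "(\<Sum>i\<in>insert x S. a i * (\<Prod>k\<in>insert x S-{i}. b k)) =
        a x * (\<Prod>k\<in>S. b k) + b x * (\<Sum>i\<in>S. a i * (\<Prod>k\<in>S-{i}. b k))"
      using insert by simp
    have "degree (\<Prod>i\<in>insert x S. [:b i, a i:]) \<le> (\<Sum>i\<in>insert x S. degree [:b i, a i:])"
      using degree_prod_sum_le[of "insert x S" "\<lambda>i. [:b i, a i:]"] insert by (simp add: o_def)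
    also have "\<dots> \<le> card (insert x S)"
      using sum_mono[of "insert x S" "\<lambda>i. degree [:b i, a i:]" "\<lambda>_. 1"] by simp
    finally have "degree (\<Prod>i\<in>insert x S. [:b i, a i:]) \<le> card (insert x S)" .
    moreover have "coeff ?P (Suc (card S)) = 0" using insert by (intro coeff_eq_0) simp
    ultimately show ?case
      using insert by (simp add: split c1 coeff_pCons ac_simps split: nat.splits)
  qed simp
  then show "coeff (\<Prod>i\<in>S. [:b i, a i:]) 1 = (\<Sum>i\<in>S. a i * (\<Prod>k\<in>S-{i}. b k))"
    and "coeff (\<Prod>i\<in>S. [:b i, a i:]) (card S) = (\<Prod>i\<in>S. a i)" by blast+
qed

lemma coeff_det_pencil_1:
  fixes A B :: "'a::comm_ring_1^'n^'n"
  shows "coeff (det (pencil A B)) 1 = det_deriv A B"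
  unfolding det_def det_deriv_def coeff_sum
proof (rule sum.cong)
  fix p assume "p \<in> {p. p permutes (UNIV::'n set)}"
  show "coeff (of_int (sign p) * (\<Prod>i\<in>UNIV. pencil A B $ i $ p i)) 1 =
    of_int (sign p) * (\<Sum>i\<in>UNIV. A $ i $ p i * (\<Prod>k\<in>UNIV - {i}. B $ k $ p k))"
    using coeffs_prod_linear_factors(1)[where S=UNIV and a="\<lambda>i. A$i$p i" and b="\<lambda>i. B$i$p i"]
    by (simp add: pencil_def of_int_poly)
qed simp

lemma coeff_det_pencil_top: "coeff (det (pencil A B)) CARD('n) = det (A::'a::comm_ring_1^'n^'n)"
  unfolding det_def coeff_sum
proof (rule sum.cong)
  fix p assume "p \<in> {p. p permutes (UNIV::'n set)}"
  show "coeff (of_int (sign p) * (\<Prod>i\<in>UNIV. pencil A B $ i $ p i)) CARD('n) =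
    of_int (sign p) * (\<Prod>i\<in>UNIV. A $ i $ p i)"
    using coeffs_prod_linear_factors(2)[where S=UNIV and a="\<lambda>i. A$i$p i" and b="\<lambda>i. B$i$p i"]
    by (simp add: pencil_def of_int_poly)
qed simp

lemma degree_det_pencil: "degree (det (pencil (A::'a::comm_ring_1^'n^'n) B)) \<le> CARD('n)"
  using degree_det_le[of "pencil A B" 1] by (simp add: pencil_def degree_pCons_le)

lemma eval_pencil: "eval_poly_mat (pencil A B) x = B + mat_smult x A"
  by (simp add: eval_poly_mat_def pencil_def mat_smult_def vec_eq_iff algebra_simps)

lemma poly_det_pencil: "poly (det (pencil A B)) x = det (B + mat_smult x A)"
  by (simp add: poly_det eval_pencil)

lemma det_pencil_nonzero:
  fixes A :: "'a::field^'n^'n"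
  assumes "det A \<noteq> 0"
  shows "det (pencil A B) \<noteq> 0"
  using coeff_det_pencil_top[of A B] assms by auto

lemma det_deriv_mat_1: "det_deriv Z (mat 1 :: 'a::comm_ring_1^'n^'n) = trace Z"
proof -
  have "det_deriv Z (mat 1 :: 'a^'n^'n) =
      (\<Sum>p\<in>{p. p permutes (UNIV::'n set)}. if p = id then trace Z else 0)"
    unfolding det_deriv_def
  proof (rule sum.cong)
    fix p assume p: "p \<in> {p. p permutes (UNIV::'n set)}"
    have "(\<Prod>k\<in>UNIV - {i}. (mat 1 :: 'a^'n^'n) $ k $ p k) = 0" if "p \<noteq> id" for i
    proof -
      obtain k where k: "p k \<noteq> k" using \<open>p \<noteq> id\<close> by (auto simp: fun_eq_iff)
      have "p (p k) \<noteq> p k" using k permutes_inj[of p UNIV] p by (auto dest: injD)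
      then obtain k' where "k' \<noteq> i" "p k' \<noteq> k'" using k by metis
      then show ?thesis by (auto simp: mat_def intro!: prod_zero bexI[of _ k'])
    qed
    then show "of_int (sign p) * (\<Sum>i\<in>UNIV. Z $ i $ p i * (\<Prod>k\<in>UNIV - {i}. (mat 1 :: 'a^'n^'n) $ k $ p k))
        = (if p = id then trace Z else 0)"
      by (auto simp: trace_def mat_def sign_id)
  qed simp
  also have "\<dots> = trace Z"
    by (simp add: sum.delta' permutes_id)
  finally show ?thesis .
qed

lemma det_const_poly_mat: "det (const_poly_mat (M::'a::comm_ring_1^'n^'n)) = [:det M:]"
proof -
  have "degree (det (const_poly_mat M)) \<le> CARD('n) * 0"
    by (rule degree_det_le) (simp add: const_poly_mat_def)
  moreover have "coeff (det (const_poly_mat M)) 0 = det M"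
    by (simp add: poly_0_coeff_0[symmetric] poly_det eval_poly_mat_def const_poly_mat_def)
  ultimately show ?thesis
    by (metis degree_0_id mult_0_right le_zero_eq)
qed

lemma const_poly_mat_mult_pencil:
  "const_poly_mat M ** pencil Z (mat 1) = pencil (M ** Z) (M :: 'a::comm_ring_1^'n^'n)"
proof -
  have sum_pCons: "(\<Sum>k\<in>S. [:a k, b k:]) = [:(\<Sum>k\<in>S. a k), (\<Sum>k\<in>S. b k):]"
    for S and a b :: "'n \<Rightarrow> 'a"
    by (induction S rule: infinite_finite_induct) auto
  have "(const_poly_mat M ** pencil Z (mat 1)) $ i $ j = pencil (M ** Z) M $ i $ j" for i j
  proof -
    have "(const_poly_mat M ** pencil Z (mat 1)) $ i $ j =
        (\<Sum>k\<in>UNIV. [:M$i$k * (mat 1::'a^'n^'n)$k$j, M$i$k * Z$k$j:])"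
      by (simp add: matrix_matrix_mult_def const_poly_mat_def pencil_def ac_simps)
    also have "\<dots> = [:(\<Sum>k\<in>UNIV. M$i$k * (mat 1::'a^'n^'n)$k$j), (\<Sum>k\<in>UNIV. M$i$k * Z$k$j):]"
      by (rule sum_pCons)
    also have "\<dots> = pencil (M ** Z) M $ i $ j"
      by (simp add: pencil_def matrix_matrix_mult_def mat_def if_distrib cong: if_cong)
    finally show ?thesis .
  qed
  then show ?thesis by (simp add: vec_eq_iff)
qed

lemma det_deriv_mult: "det_deriv (M ** Z) M = det M * trace (Z :: 'a::comm_ring_1^'n^'n)"
proof -
  have "det (pencil (M ** Z) M) = [:det M:] * det (pencil Z (mat 1))"
    by (metis const_poly_mat_mult_pencil det_mul det_const_poly_mat)
  then show ?thesis
    using coeff_det_pencil_1[of "M ** Z" M] coeff_det_pencil_1[of Z "mat 1"] det_deriv_mat_1[of Z]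
    by simp
qed

lemma poly_det_deriv: "poly (det_deriv A B) x = det_deriv (eval_poly_mat A x) (eval_poly_mat B x)"
  by (simp add: det_deriv_def eval_poly_mat_def poly_sum poly_prod)

lemma det_deriv_scale:
  fixes A N :: "'a::comm_ring_1^'n^'n"
  shows "det_deriv A (\<chi> i j. c * N$i$j) = c ^ (CARD('n) - 1) * det_deriv A N"
proof -
  have "(\<Prod>k\<in>UNIV-{i}. c * N$k$p k) = c ^ (CARD('n) - 1) * (\<Prod>k\<in>UNIV-{i}. N$k$p k)"
    for i :: 'n and p
    by (simp add: prod.distrib card_Diff_singleton)
  then show ?thesis
    by (simp add: det_deriv_def sum_distrib_left ac_simps)
qed

section \<open>Polynomials over a large field\<close>

lemma obtain_finite_subset_avoiding:
  fixes K :: "'a set"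
  assumes "finite K" and "infinite (UNIV::'a set) \<or> m + card K \<le> CARD('a)"
  obtains A where "finite A" "card A = m" "A \<inter> K = {}"
proof (cases "finite (UNIV::'a set)")
  case True
  then have "m \<le> card (UNIV - K)" using assms by (simp add: card_Diff_subset)
  then obtain A where "A \<subseteq> UNIV - K" "card A = m" by (meson obtain_subset_with_card_n)
  moreover have "finite A" using True by (rule finite_subset[OF subset_UNIV])
  ultimately show ?thesis using that by blast
next
  case False
  then have "infinite (UNIV - K)" using assms(1) by auto
  then obtain A where "finite A" "card A = m" "A \<subseteq> UNIV - K"
    using infinite_arbitrarily_large by blast
  then show ?thesis using that by blast
qed

lemma poly_eqI_outside:
  fixes p q :: "'a::field poly"
  assumes "finite K" and "infinite (UNIV::'a set) \<or> d + 1 + card K \<le> CARD('a)"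
    and "degree p \<le> d" "degree q \<le> d" and "\<And>x. x \<notin> K \<Longrightarrow> poly p x = poly q x"
  shows "p = q"
proof -
  obtain A where A: "finite A" "card A = d + 1" "A \<inter> K = {}"
    using obtain_finite_subset_avoiding[OF assms(1), of "d + 1"] assms(2) by blast
  show ?thesis
    by (rule poly_eqI_degree[of A]) (use A assms(3-5) in auto)
qed

lemma exists_nonroot_outside:
  fixes p :: "'a::field poly"
  assumes "p \<noteq> 0" "finite K" "infinite (UNIV::'a set) \<or> degree p + 1 + card K \<le> CARD('a)"
  shows "\<exists>c. c \<notin> K \<and> poly p c \<noteq> 0"
  using poly_eqI_outside[OF assms(2,3), of p 0] assms(1) by auto

section \<open>Skew-symmetric matrices\<close>

lemma Qn_iff: "x \<in> Qn \<longleftrightarrow> (\<forall>i j. x$j$i = - x$i$j)"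
  unfolding Qn_def skew_symmetric_def transpose_def mem_Collect_eq vec_eq_iff by simp

lemma QnD: "x \<in> Qn \<Longrightarrow> x$j$i = - x$i$j"
  unfolding Qn_iff by blast

lemma Qn_diag:
  assumes "x \<in> Qn" "(2::'a::field) \<noteq> 0"
  shows "x$i$i = (0::'a)"
proof -
  have "2 * x$i$i = 0" using QnD[OF assms(1), of i i] by (metis mult_2 add.right_inverse)
  then show ?thesis using assms(2) by simp
qed

lemma Qn_zero: "0 \<in> Qn"
  by (simp add: Qn_iff)

lemma Qn_add:
  assumes "x \<in> Qn" "y \<in> Qn" shows "x + y \<in> Qn"
  unfolding Qn_iff
proof (intro allI)
  fix i j
  show "(x + y)$j$i = - (x + y)$i$j" using QnD[OF assms(1), of j i] QnD[OF assms(2), of j i] by simp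
qed

lemma Qn_uminus:
  assumes "x \<in> Qn" shows "- x \<in> Qn"
  unfolding Qn_iff
proof (intro allI)
  fix i j
  show "(- x)$j$i = - (- x)$i$j" using QnD[OF assms, of j i] by simp
qed

lemma Qn_diff: "x \<in> Qn \<Longrightarrow> y \<in> Qn \<Longrightarrow> x - y \<in> Qn"
  using Qn_add[OF _ Qn_uminus] by simp

lemma Qn_mat_smult:
  assumes "x \<in> Qn" shows "mat_smult c x \<in> Qn"
  unfolding Qn_iff
proof (intro allI)
  fix i j
  show "mat_smult c x $j$i = - mat_smult c x $i$j" using QnD[OF assms, of j i] by (simp add: mat_smult_def)
qed

lemma Qn_add_mat_smult: "u \<in> Qn \<Longrightarrow> w \<in> Qn \<Longrightarrow> u + mat_smult l w \<in> Qn"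
  by (intro Qn_add Qn_mat_smult)

lemma obtain_inverse:
  fixes M :: "'a::field^'n^'n"
  assumes "det M \<noteq> 0"
  obtains Mi where "M ** Mi = mat 1" "Mi ** M = mat 1" "det Mi \<noteq> 0"
proof -
  obtain Mi where Mi: "M ** Mi = mat 1" "Mi ** M = mat 1"
    using assms invertible_det_nz[of M] unfolding invertible_def by blast
  then have "det M * det Mi = 1" by (metis det_I det_mul)
  then have "det Mi \<noteq> 0" by auto
  then show ?thesis using that Mi by blast
qed

lemma inverse_in_Qn:
  fixes M :: "'a::field^'n^'n"
  assumes "M \<in> Qn" "M ** Mi = mat 1" "Mi ** M = mat 1"
  shows "Mi \<in> Qn"
proof -
  have "transpose Mi ** transpose M = mat 1"
    using arg_cong[OF assms(2), of transpose] by (simp add: matrix_transpose_mul)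
  then have left_inv: "- transpose Mi ** M = mat 1"
    using assms(1) by (simp add: Qn_def skew_symmetric_def matrix_matrix_mult_def vec_eq_iff sum_negf)
  have "- transpose Mi = (- transpose Mi ** M) ** Mi"
    using assms(2) by (simp add: matrix_mul_assoc[symmetric])
  then have "transpose Mi = - Mi" using left_inv by (simp add: minus_equation_iff)
  then show ?thesis by (simp add: Qn_def skew_symmetric_def)
qed

lemma det_deriv_inverse:
  fixes M :: "'a::field^'n^'n"
  assumes "M ** Mi = mat 1"
  shows "det_deriv X M = det M * trace (Mi ** X)"
  using det_deriv_mult[of M "Mi ** X"] assms by (simp add: matrix_mul_assoc)

lemma obtain_signed_pairing:
  assumes "even CARD('n)"
  obtains \<tau> :: "'n::finite \<Rightarrow> 'n" and s :: "'n \<Rightarrow> 'a::comm_ring_1"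
  where "\<And>a. \<tau> (\<tau> a) = a" "\<And>a. \<tau> a \<noteq> a" "\<And>a. s (\<tau> a) = - s a" "\<And>a. s a * s a = 1"
proof -
  obtain h where h: "bij_betw h {0..<CARD('n)} (UNIV::'n set)"
    using ex_bij_betw_nat_finite[of "UNIV::'n set"] by auto
  define ix where "ix = inv_into {0..<CARD('n)} h"
  have ix_less: "ix a < CARD('n)" for a
    using h unfolding ix_def by (metis atLeastLessThan_iff bij_betw_def inv_into_into UNIV_I)
  have h_ix: "h (ix a) = a" for a
    using h unfolding ix_def by (metis bij_betw_def f_inv_into_f UNIV_I)
  have ix_h: "k < CARD('n) \<Longrightarrow> ix (h k) = k" for k
    using h unfolding ix_def by (simp add: bij_betw_def inv_into_f_f)
  define pr :: "nat \<Rightarrow> nat" where "pr k = (if even k then k + 1 else k - 1)" for k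
  have pr_less: "k < CARD('n) \<Longrightarrow> pr k < CARD('n)" for k
    using assms unfolding pr_def by (cases "even k") (auto, presburger)
  define \<tau> where "\<tau> a = h (pr (ix a))" for a
  define s :: "'n \<Rightarrow> 'a" where "s a = (if even (ix a) then 1 else -1)" for a
  have ix_\<tau>: "ix (\<tau> a) = pr (ix a)" for a
    unfolding \<tau>_def using ix_h pr_less ix_less by blast
  show ?thesis
  proof
    have "pr (pr k) = k" for k unfolding pr_def by (cases "even k") auto
    then show "\<tau> (\<tau> a) = a" for a using ix_\<tau> h_ix unfolding \<tau>_def by simp
    show "\<tau> a \<noteq> a" for a using ix_\<tau>[of a] unfolding pr_def by (cases "even (ix a)") (auto, presburger)
    show "s (\<tau> a) = - s a" for a using ix_\<tau>[of a] unfolding s_def pr_def by (cases "ix a") auto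
    show "s a * s a = 1" for a unfolding s_def by simp
  qed
qed

lemma obtain_invertible_skew:
  assumes "even CARD('n)"
  obtains Y :: "'a::field^'n^'n" where "Y \<in> Qn" "det Y \<noteq> 0"
proof -
  obtain \<tau> :: "'n \<Rightarrow> 'n" and s :: "'n \<Rightarrow> 'a" where
    \<tau>: "\<And>a. \<tau> (\<tau> a) = a" "\<And>a. \<tau> a \<noteq> a" "\<And>a. s (\<tau> a) = - s a" "\<And>a. s a * s a = 1"
    using obtain_signed_pairing[OF assms] by blast
  define Y :: "'a^'n^'n" where "Y = (\<chi> a b. if b = \<tau> a then s a else 0)"
  have \<tau>_iff: "a = \<tau> b \<longleftrightarrow> b = \<tau> a" for a b using \<tau>(1) by metis
  have "Y \<in> Qn" unfolding Qn_iff
  proof (intro allI)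
    fix i j
    show "Y$j$i = - Y$i$j" unfolding Y_def using \<tau>(3)[of i] \<tau>_iff[of i j] by auto
  qed
  have "Y ** Y = - mat 1"
  proof -
    have "(Y ** Y) $ a $ c = s a * Y$(\<tau> a)$c" for a c
    proof -
      have "(Y ** Y) $ a $ c = (\<Sum>b\<in>UNIV. Y$a$b * Y$b$c)"
        unfolding matrix_matrix_mult_def by simp
      also have "\<dots> = (\<Sum>b\<in>UNIV. if b = \<tau> a then s a * Y$b$c else 0)"
        by (rule sum.cong[OF refl]) (simp add: Y_def)
      finally show ?thesis by (simp add: sum.delta')
    qed
    then show ?thesis using \<tau>(1,3,4) by (auto simp: vec_eq_iff Y_def mat_def)
  qed
  moreover have "- mat 1 = (\<chi> i j. (-1) * (mat 1 :: 'a^'n^'n)$i$j)"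
    by (simp add: vec_eq_iff)
  ultimately have "det Y * det Y = det (\<chi> i j. (-1) * (mat 1 :: 'a^'n^'n)$i$j)"
    by (metis det_mul)
  then have "det Y * det Y = (-1) ^ CARD('n)" by (simp only: det_scale det_I mult_1_right)
  then show ?thesis using that \<open>Y \<in> Qn\<close> by force
qed

definition skew_unit :: "'n \<Rightarrow> 'n \<Rightarrow> 'a::field^'n^'n" where
  "skew_unit i j = (\<chi> a b. if a = i \<and> b = j then 1 else if a = j \<and> b = i then -1 else 0)"

lemma skew_unit_Qn: "i \<noteq> j \<Longrightarrow> skew_unit i j \<in> Qn"
  unfolding Qn_iff skew_unit_def by simp

lemma trace_skew_unit_mult:
  fixes D :: "'a::field^'n^'n"
  assumes "i \<noteq> j"
  shows "trace (skew_unit i j ** D) = D$j$i - D$i$j"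
proof -
  have "(skew_unit i j ** D) $ a $ a = (if a = i then D$j$i else 0) - (if a = j then D$i$j else 0)" for a
  proof -
    have "(skew_unit i j ** D) $ a $ a =
        (\<Sum>b\<in>UNIV. (if a = i \<and> b = j then D$b$a else 0) - (if a = j \<and> b = i then D$b$a else 0))"
      unfolding matrix_matrix_mult_def skew_unit_def
      by (simp, rule sum.cong[OF refl]) (use assms in auto)
    then show ?thesis by (simp add: sum_subtractf)
  qed
  then show ?thesis unfolding trace_def by (simp add: sum_subtractf)
qed

lemma trace_add_mult: "trace ((A + B) ** C) = trace (A ** C) + trace (B ** (C::'a::field^'n^'n))"
  by (simp add: trace_def matrix_matrix_mult_def sum.distrib algebra_simps)

lemma trace_mat_smult_mult: "trace (mat_smult c A ** B) = c * trace (A ** (B::'a::field^'n^'n))"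
  by (simp add: trace_def matrix_matrix_mult_def mat_smult_def sum_distrib_left ac_simps)

lemma exists_invertible_in_pencil:
  fixes A B :: "'a::field^'n^'n"
  assumes "infinite (UNIV::'a set) \<or> CARD('n) + 2 \<le> CARD('a)" and "det A \<noteq> 0 \<or> det B \<noteq> 0"
  shows "\<exists>c. c \<noteq> 0 \<and> det (A + mat_smult c B) \<noteq> 0"
proof -
  have "det (pencil B A) \<noteq> 0"
    using assms(2) poly_det_pencil[of B A 0] det_pencil_nonzero[of B A] by (auto simp: mat_smult_0)
  moreover have "infinite (UNIV::'a set) \<or> degree (det (pencil B A)) + 1 + card {0::'a} \<le> CARD('a)"
    using degree_det_pencil[of B A] assms(1) by auto
  ultimately show ?thesis
    using exists_nonroot_outside[of "det (pencil B A)" "{0}"] by (auto simp: poly_det_pencil)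
qed

lemma entry_eq_trace_diff:
  fixes i j :: "'n::finite"
  assumes "even CARD('n)" "(2::'a) \<noteq> 0"
    and "infinite (UNIV::'a set) \<or> CARD('n) + 2 \<le> CARD('a)" and "i \<noteq> j"
  obtains S1 S2 :: "'a::field^'n^'n" where "S1 \<in> Qn" "det S1 \<noteq> 0" "S2 \<in> Qn" "det S2 \<noteq> 0"
    "\<And>W. W \<in> Qn \<Longrightarrow> W$i$j = trace (S1 ** W) - trace (S2 ** W)"
proof -
  obtain Y :: "'a^'n^'n" where Y: "Y \<in> Qn" "det Y \<noteq> 0"
    using obtain_invertible_skew[OF assms(1)] by blast
  obtain c where c: "c \<noteq> 0" "det (Y + mat_smult c (skew_unit i j)) \<noteq> 0"
    using exists_invertible_in_pencil[OF assms(3)] Y(2) by blast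
  define Y' where "Y' = Y + mat_smult c (skew_unit i j)"
  have Y': "Y' \<in> Qn" "det Y' \<noteq> 0"
    unfolding Y'_def using Qn_add[OF Y(1) Qn_mat_smult[OF skew_unit_Qn[OF assms(4)]]] c(2) by simp_all
  have "W$i$j = trace (mat_smult (1 / (2 * c)) Y ** W) - trace (mat_smult (1 / (2 * c)) Y' ** W)"
    if "W \<in> Qn" for W
  proof -
    have "trace (Y' ** W) = trace (Y ** W) + c * (W$j$i - W$i$j)"
      unfolding Y'_def trace_add_mult trace_mat_smult_mult trace_skew_unit_mult[OF assms(4)] ..
    also have "W$j$i = - W$i$j" using QnD[OF that] .
    finally have "trace (Y ** W) - trace (Y' ** W) = 2 * c * W$i$j"
      by (simp add: algebra_simps)
    then show ?thesis using assms(2) c(1)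
      by (simp add: trace_mat_smult_mult diff_divide_distrib[symmetric])
  qed
  moreover have "mat_smult (1 / (2 * c)) M \<in> Qn \<and> det (mat_smult (1 / (2 * c)) M) \<noteq> 0"
    if "M \<in> Qn" "det M \<noteq> 0" for M :: "'a^'n^'n"
    using that assms(2) c(1) by (simp add: Qn_mat_smult det_mat_smult)
  ultimately show ?thesis using that[of "mat_smult (1 / (2 * c)) Y" "mat_smult (1 / (2 * c)) Y'"] Y Y'
    by blast
qed

lemma Qn_eq_0_by_trace:
  fixes D :: "'a::field^'n^'n"
  assumes "even CARD('n)" "(2::'a) \<noteq> 0" "infinite (UNIV::'a set) \<or> CARD('n) + 2 \<le> CARD('a)"
    and "D \<in> Qn" and "\<And>S. S \<in> Qn \<Longrightarrow> det S \<noteq> 0 \<Longrightarrow> trace (S ** D) = 0"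
  shows "D = 0"
proof -
  have "D$i$j = 0" for i j
  proof (cases "i = j")
    case True
    then show ?thesis using Qn_diag[OF assms(4,2)] by simp
  next
    case False
    then obtain S1 S2 :: "'a^'n^'n" where "S1 \<in> Qn" "det S1 \<noteq> 0" "S2 \<in> Qn" "det S2 \<noteq> 0"
      "D$i$j = trace (S1 ** D) - trace (S2 ** D)"
      using entry_eq_trace_diff[OF assms(1-3)] assms(4) by metis
    then show ?thesis using assms(5) by simp
  qed
  then show ?thesis by (simp add: vec_eq_iff)
qed

lemma Qn_eq_0_by_det_deriv:
  fixes D :: "'a::field^'n^'n"
  assumes "even CARD('n)" "(2::'a) \<noteq> 0" "infinite (UNIV::'a set) \<or> CARD('n) + 2 \<le> CARD('a)"
    and "D \<in> Qn" and "\<And>B. B \<in> Qn \<Longrightarrow> det B \<noteq> 0 \<Longrightarrow> det_deriv D B = 0"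
  shows "D = 0"
proof (rule Qn_eq_0_by_trace[OF assms(1-4)])
  fix S :: "'a^'n^'n" assume S: "S \<in> Qn" "det S \<noteq> 0"
  obtain Si where Si: "S ** Si = mat 1" "Si ** S = mat 1" "det Si \<noteq> 0"
    using obtain_inverse[OF S(2)] by blast
  have "det_deriv D Si = det Si * trace (S ** D)" using det_deriv_inverse[OF Si(2)] .
  then show "trace (S ** D) = 0" using assms(5)[OF inverse_in_Qn[OF S(1) Si(1,2)] Si(3)] Si(3) by simp
qed

lemma Qn_eq_by_det_add:
  fixes A A' :: "'a::field^'n^'n"
  assumes "even CARD('n)" "(2::'a) \<noteq> 0" "infinite (UNIV::'a set) \<or> CARD('n) + 2 \<le> CARD('a)"
    and "A \<in> Qn" "A' \<in> Qn" and "\<And>z. z \<in> Qn \<Longrightarrow> det (A + z) = det (A' + z)"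
  shows "A = A'"
proof -
  have "A - A' = 0"
  proof (rule Qn_eq_0_by_det_deriv[OF assms(1-3) Qn_diff[OF assms(4,5)]])
    fix B :: "'a^'n^'n" assume B: "B \<in> Qn"
    have "det (B + mat_smult \<mu> (A - A')) = det B" for \<mu>
    proof (cases "\<mu> = 0")
      case False
      define z where "z = mat_smult (1 / \<mu>) B - A'"
      have "z \<in> Qn" unfolding z_def using B assms(5) by (intro Qn_diff Qn_mat_smult)
      have "B + mat_smult \<mu> (A - A') = mat_smult \<mu> (A + z)"
        using False by (simp add: z_def mat_smult_def vec_eq_iff field_simps)
      then have "det (B + mat_smult \<mu> (A - A')) = \<mu> ^ CARD('n) * det (A' + z)"
        using assms(6)[OF \<open>z \<in> Qn\<close>] by (simp add: det_mat_smult)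
      also have "A' + z = mat_smult (1 / \<mu>) B" by (simp add: z_def)
      finally show ?thesis using False by (simp add: det_mat_smult power_one_over)
    qed (simp add: mat_smult_0)
    then have "det (pencil (A - A') B) = [:det B:]"
      using degree_det_pencil[of "A - A'" B] assms(3)
      by (intro poly_eqI_outside[of "{}" "CARD('n)"]) (auto simp: poly_det_pencil)
    then show "det_deriv (A - A') B = 0" using coeff_det_pencil_1[of "A - A'" B] by simp
  qed
  then show ?thesis by simp
qed

lemma Qn_eq_by_det_deriv:
  fixes M1 M2 :: "'a::field^'n^'n"
  assumes "even CARD('n)" "(2::'a) \<noteq> 0" "infinite (UNIV::'a set) \<or> CARD('n) + 2 \<le> CARD('a)"
    and "M1 \<in> Qn" "M2 \<in> Qn" and "det M1 = det M2" "det M1 \<noteq> 0"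
    and "\<And>X. X \<in> Qn \<Longrightarrow> det_deriv X M1 = det_deriv X M2"
  shows "M1 = M2"
proof -
  obtain M1i where M1i: "M1 ** M1i = mat 1" "M1i ** M1 = mat 1"
    using obtain_inverse[OF assms(7)] by blast
  obtain M2i where M2i: "M2 ** M2i = mat 1" "M2i ** M2 = mat 1"
  proof -
    have "det M2 \<noteq> 0" using assms(6,7) by simp
    then show ?thesis using obtain_inverse[of M2] that by blast
  qed
  have "M1i - M2i = 0"
  proof (rule Qn_eq_0_by_trace[OF assms(1-3)])
    show "M1i - M2i \<in> Qn"
      using inverse_in_Qn[OF assms(4) M1i] inverse_in_Qn[OF assms(5) M2i] by (rule Qn_diff)
    fix S :: "'a^'n^'n" assume "S \<in> Qn"
    have "det M1 * trace (M1i ** S) = det M2 * trace (M2i ** S)"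
      using assms(8)[OF \<open>S \<in> Qn\<close>] unfolding det_deriv_inverse[OF M1i(1)] det_deriv_inverse[OF M2i(1)] .
    then have "trace (S ** M1i) = trace (S ** M2i)"
      using assms(6,7) trace_mul_sym[of S M1i] trace_mul_sym[of S M2i] by simp
    moreover have "S ** (M1i - M2i) = S ** M1i - S ** M2i"
      by (simp add: matrix_matrix_mult_def vec_eq_iff sum_subtractf algebra_simps)
    ultimately show "trace (S ** (M1i - M2i)) = 0" by (simp add: trace_sub)
  qed
  then have "M1 = M1 ** (M1i ** M2)" using M2i(2) by simp
  also have "\<dots> = M2" using M1i(1) by (simp add: matrix_mul_assoc)
  finally show ?thesis .
qed

section \<open>Entries as combinations of determinants\<close>

lemma obtain_lagrange_basis:
  fixes T :: "'a::field set"
  assumes "finite T" "card T = m + 1"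
  obtains L where "\<And>s t. s \<in> T \<Longrightarrow> t \<in> T \<Longrightarrow> poly (L s) t = (if t = s then 1 else 0)"
    and "\<And>s. s \<in> T \<Longrightarrow> degree (L s) \<le> m"
proof
  define L where "L s = smult (inverse (\<Prod>t\<in>T-{s}. (s - t))) (\<Prod>t\<in>T-{s}. [:-t, 1:])" for s
  show "poly (L s) t = (if t = s then 1 else 0)" if "s \<in> T" "t \<in> T" for s t
  proof -
    have "(\<Prod>t\<in>T-{s}. (s - t)) \<noteq> 0" using assms(1) by (auto simp: prod_zero_iff)
    moreover have "(\<Prod>u\<in>T-{s}. t - u) = 0" if "t \<noteq> s"
      using that \<open>t \<in> T\<close> assms(1) by (intro prod_zero) (auto intro!: bexI[of _ t])
    ultimately show ?thesis by (auto simp: L_def poly_prod)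
  qed
  show "degree (L s) \<le> m" if "s \<in> T" for s
  proof -
    have "degree (\<Prod>t\<in>T-{s}. [:-t, 1:]) \<le> (\<Sum>t\<in>T-{s}. degree [:-t, (1::'a):])"
      using degree_prod_sum_le[of "T-{s}" "\<lambda>t. [:-t, 1:]"] assms(1) by (simp add: o_def)
    also have "\<dots> = m" using that assms by simp
    finally show ?thesis by (simp add: L_def)
  qed
qed

lemma obtain_coeff_interpolation:
  fixes T :: "'a::field set"
  assumes "finite T" "card T = m + 1"
  obtains \<gamma> where "\<And>p. degree p \<le> m \<Longrightarrow> coeff p k = (\<Sum>s\<in>T. \<gamma> s * poly p s)"
proof -
  obtain L where L_at: "\<And>s t. s \<in> T \<Longrightarrow> t \<in> T \<Longrightarrow> poly (L s) t = (if t = s then 1 else 0)"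
    and degree_L: "\<And>s. s \<in> T \<Longrightarrow> degree (L s) \<le> m"
    using obtain_lagrange_basis[OF assms] by blast
  show ?thesis
  proof (rule that)
    fix p :: "'a poly" assume p: "degree p \<le> m"
    define q where "q = (\<Sum>s\<in>T. smult (poly p s) (L s))"
    have "p = q"
    proof (rule poly_eqI_degree[of T])
      fix t assume "t \<in> T"
      have "poly q t = (\<Sum>s\<in>T. if s = t then poly p s else 0)"
        unfolding q_def poly_sum by (rule sum.cong[OF refl]) (simp add: L_at \<open>t \<in> T\<close>)
      then show "poly p t = poly q t" using \<open>t \<in> T\<close> assms(1) by simp
    next
      show "degree q < card T"
        unfolding q_def using degree_L assms
        by (intro le_less_trans[OF degree_sum_le]) (auto intro: order.trans[OF degree_smult_le])
    qed (use p assms in simp)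
    then have "coeff p k = coeff q k" by simp
    then show "coeff p k = (\<Sum>s\<in>T. coeff (L s) k * poly p s)"
      unfolding q_def coeff_sum by (simp add: mult.commute)
  qed
qed

lemma obtain_det_deriv_interpolation:
  fixes T :: "'a::field set"
  assumes "finite T" "card T = CARD('n) + 1"
  obtains \<gamma> where "\<And>A B :: 'a^'n^'n. det_deriv A B = (\<Sum>s\<in>T. \<gamma> s * det (B + mat_smult s A))"
proof -
  obtain \<gamma> where \<gamma>: "\<And>p. degree p \<le> CARD('n) \<Longrightarrow> coeff p 1 = (\<Sum>s\<in>T. \<gamma> s * poly p s)"
    using obtain_coeff_interpolation[OF assms] by blast
  show ?thesis
  proof (rule that)
    fix A B :: "'a^'n^'n"
    have "det_deriv A B = coeff (det (pencil A B)) 1" by (rule coeff_det_pencil_1[symmetric])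
    also have "\<dots> = (\<Sum>s\<in>T. \<gamma> s * poly (det (pencil A B)) s)" using \<gamma>[OF degree_det_pencil] .
    finally show "det_deriv A B = (\<Sum>s\<in>T. \<gamma> s * det (B + mat_smult s A))"
      by (simp add: poly_det_pencil)
  qed
qed

inductive det_combination :: "('a::field^'n^'n \<Rightarrow> 'a) \<Rightarrow> bool" where
  det_translate: "x \<in> Qn \<Longrightarrow> det_combination (\<lambda>W. det (x + W))"
| zero: "det_combination (\<lambda>W. 0)"
| add: "det_combination f \<Longrightarrow> det_combination g \<Longrightarrow> det_combination (\<lambda>W. f W + g W)"
| scale: "det_combination f \<Longrightarrow> det_combination (\<lambda>W. c * f W)"

lemma det_combination_diff:
  "det_combination f \<Longrightarrow> det_combination g \<Longrightarrow> det_combination (\<lambda>W. f W - g W)"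
  using det_combination.add[OF _ det_combination.scale[of g "-1"]] by simp

lemma det_combination_sum:
  "finite T \<Longrightarrow> (\<And>s. s \<in> T \<Longrightarrow> det_combination (f s)) \<Longrightarrow> det_combination (\<lambda>W. \<Sum>s\<in>T. f s W)"
  by (induction T rule: finite_induct) (simp_all add: det_combination.zero det_combination.add)

lemma trace_det_combination:
  fixes S :: "'a::field^'n^'n"
  assumes "infinite (UNIV::'a set) \<or> CARD('n) + 2 \<le> CARD('a)" and "S \<in> Qn" "det S \<noteq> 0"
  shows "det_combination (\<lambda>W. trace (S ** W))"
proof -
  obtain T :: "'a set" where T: "finite T" "card T = CARD('n) + 1" "T \<inter> {0} = {}"
    using obtain_finite_subset_avoiding[of "{0}" "CARD('n) + 1"] assms(1) by auto
  obtain \<gamma> where \<gamma>: "\<And>A B :: 'a^'n^'n. det_deriv A B = (\<Sum>s\<in>T. \<gamma> s * det (B + mat_smult s A))"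
    using obtain_det_deriv_interpolation[OF T(1,2)] by blast
  obtain Si where Si: "S ** Si = mat 1" "Si ** S = mat 1" "det Si \<noteq> 0"
    using obtain_inverse[OF assms(3)] by blast
  have trace_eq: "trace (S ** W) = (\<Sum>s\<in>T. (\<gamma> s * s ^ CARD('n) / det Si) * det (mat_smult (1 / s) Si + W))"
    for W :: "'a^'n^'n"
  proof -
    have "trace (S ** W) = det_deriv W Si / det Si"
      using det_deriv_inverse[OF Si(2)] Si(3) by simp
    also have "\<dots> = (\<Sum>s\<in>T. \<gamma> s * det (Si + mat_smult s W) / det Si)"
      by (simp add: \<gamma> sum_divide_distrib)
    also have "\<dots> = (\<Sum>s\<in>T. (\<gamma> s * s ^ CARD('n) / det Si) * det (mat_smult (1 / s) Si + W))"
    proof (rule sum.cong[OF refl])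
      fix s assume "s \<in> T"
      then have "s \<noteq> 0" using T(3) by auto
      then have "Si + mat_smult s W = mat_smult s (mat_smult (1 / s) Si + W)"
        by (simp add: mat_smult_def vec_eq_iff field_simps)
      then show "\<gamma> s * det (Si + mat_smult s W) / det Si =
          (\<gamma> s * s ^ CARD('n) / det Si) * det (mat_smult (1 / s) Si + W)"
        by (simp add: det_mat_smult)
    qed
    finally show ?thesis .
  qed
  have "mat_smult (1 / s) Si \<in> Qn" for s
    using inverse_in_Qn[OF assms(2) Si(1,2)] by (rule Qn_mat_smult)
  then have "det_combination
      (\<lambda>W. \<Sum>s\<in>T. (\<gamma> s * s ^ CARD('n) / det Si) * det (mat_smult (1 / s) Si + W))"
    by (intro det_combination_sum[OF T(1)] det_combination.scale det_combination.det_translate)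
  then show ?thesis unfolding trace_eq .
qed

lemma entry_det_combination:
  assumes "even CARD('n)" "(2::'a::field) \<noteq> 0" "infinite (UNIV::'a set) \<or> CARD('n) + 2 \<le> CARD('a)"
  shows "\<exists>f. det_combination f \<and> (\<forall>W::'a^'n^'n. W \<in> Qn \<longrightarrow> W$i$j = f W)"
proof (cases "i = j")
  case True
  then show ?thesis using Qn_diag[OF _ assms(2)] det_combination.zero by blast
next
  case False
  then obtain S1 S2 :: "'a^'n^'n" where S: "S1 \<in> Qn" "det S1 \<noteq> 0" "S2 \<in> Qn" "det S2 \<noteq> 0"
    and entry: "\<And>W. W \<in> Qn \<Longrightarrow> W$i$j = trace (S1 ** W) - trace (S2 ** W)"
    using entry_eq_trace_diff[OF assms] by metis
  have "det_combination (\<lambda>W. trace (S1 ** W) - trace (S2 ** W))"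
    using S by (intro det_combination_diff trace_det_combination[OF assms(3)])
  then show ?thesis using entry by blast
qed

section \<open>Polynomial curves of skew-symmetric matrices\<close>

lemma coeff_poly_const_poly:
  fixes P :: "'a::comm_ring_1 poly poly"
  shows "coeff (poly P [:\<mu>:]) j = poly (map_poly (\<lambda>r. coeff r j) P) \<mu>"
  by (induction P) (simp_all add: map_poly_pCons)

lemma coeff_coeff_eq_0_if_const:
  fixes P :: "'a::field poly poly"
  assumes "infinite (UNIV::'a set) \<or> d + 1 \<le> CARD('a)" and "degree P \<le> d"
    and "\<And>\<mu>. coeff (poly P [:\<mu>:]) j = c" and "k \<ge> 1"
  shows "coeff (coeff P k) j = 0"
proof -
  define Q where "Q = map_poly (\<lambda>r. coeff r j) P"
  have "Q = [:c:]"
  proof (rule poly_eqI_outside[of "{}" d])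
    show "degree Q \<le> d" unfolding Q_def using map_poly_degree_leq assms(2) order.trans by blast
  qed (use assms(1,3) in \<open>simp_all add: Q_def coeff_poly_const_poly[symmetric]\<close>)
  then have "coeff Q k = 0" using assms(4) by (cases k) auto
  then show ?thesis by (simp add: Q_def coeff_map_poly)
qed

lemma det_deriv_const_along_curve:
  fixes N H :: "'a::field poly^'n^'n" and X :: "'a^'n^'n"
  assumes "H = (\<chi> i j. monom 1 1 * N$i$j)"
    and "infinite (UNIV::'a set) \<or> CARD('n) + 1 \<le> CARD('a)"
    and "\<And>y. y \<in> Qn \<Longrightarrow> degree (det (const_poly_mat y + H)) \<le> CARD('n)"
    and "\<And>y. y \<in> Qn \<Longrightarrow> coeff (det (const_poly_mat y + H)) CARD('n) = d"
    and "X \<in> Qn"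
  shows "det_deriv X (eval_poly_mat N l) = det_deriv X (eval_poly_mat N 0)"
proof -
  define P where "P = det (pencil (const_poly_mat X) H)"
  have P_at: "poly P [:\<mu>:] = det (const_poly_mat (mat_smult \<mu> X) + H)" for \<mu>
  proof -
    have "eval_poly_mat (pencil (const_poly_mat X) H) [:\<mu>:] = const_poly_mat (mat_smult \<mu> X) + H"
      by (simp add: eval_poly_mat_def pencil_def const_poly_mat_def mat_smult_def vec_eq_iff add.commute)
    then show ?thesis by (simp add: P_def poly_det)
  qed
  have deg_P: "degree P \<le> CARD('n)"
    unfolding P_def using degree_det_le[of "pencil (const_poly_mat X) H" 1]
    by (simp add: pencil_def const_poly_mat_def degree_pCons_le)
  \<comment> \<open>\<open>P\<close> is \<open>det (\<mu> X + H t)\<close> as a polynomial in \<open>\<mu>\<close> over polynomials in \<open>t\<close>; its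
    \<open>t\<^sup>j\<close>-coefficient does not depend on \<open>\<mu>\<close> when \<open>j \<ge> n\<close>\<close>
  have P1_high: "coeff (coeff P 1) j = 0" if "j \<ge> CARD('n)" for j
  proof (rule coeff_coeff_eq_0_if_const[OF assms(2) deg_P _ le_refl])
    fix \<mu>
    have "mat_smult \<mu> X \<in> Qn" using assms(5) by (rule Qn_mat_smult)
    then have "degree (poly P [:\<mu>:]) \<le> CARD('n)" "coeff (poly P [:\<mu>:]) CARD('n) = d"
      using assms(3,4) by (simp_all add: P_at)
    then show "coeff (poly P [:\<mu>:]) j = (if j = CARD('n) then d else 0)"
      using that by (auto intro: coeff_eq_0)
  qed
  define L where "L = det_deriv (const_poly_mat X) N"
  define k where "k = CARD('n) - 1"
  have "coeff P 1 = monom 1 1 ^ k * L"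
    unfolding P_def L_def coeff_det_pencil_1 assms(1) k_def by (rule det_deriv_scale)
  then have "coeff P 1 = monom 1 k * L" by (simp add: monom_power)
  moreover have "Suc m + k \<ge> CARD('n)" for m
    unfolding k_def using zero_less_card_finite[where 'a='n] by linarith
  ultimately have "coeff L (Suc m) = 0" for m
    using P1_high[of "Suc m + k"] by (simp add: coeff_monom_mult)
  then have "L = [:coeff L 0:]"
    by (intro poly_eqI) (simp add: coeff_pCons split: nat.split)
  then have "poly L l = poly L 0"
    by (metis poly_pCons poly_0 mult_zero_right add_0_right)
  then show ?thesis
    by (simp add: L_def poly_det_deriv eval_poly_mat_def const_poly_mat_def)
qed

text \<open>Write \<open>H = t N\<close>. Then \<open>det N\<close> is the constant \<open>d\<close> and \<open>det_deriv X (N t)\<close> does not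
  depend on \<open>t\<close>; an invertible skew-symmetric matrix is determined by these data, so \<open>N\<close>
  is constant.\<close>
lemma poly_curve_is_line:
  fixes H :: "'a::field poly^'n^'n"
  assumes "even CARD('n)" "(2::'a) \<noteq> 0" "infinite (UNIV::'a set) \<or> CARD('n) + 2 \<le> CARD('a)"
    and "eval_poly_mat H 0 = 0" "\<And>l. eval_poly_mat H l \<in> Qn"
    and "\<And>y. y \<in> Qn \<Longrightarrow> degree (det (const_poly_mat y + H)) \<le> CARD('n)"
    and "\<And>y. y \<in> Qn \<Longrightarrow> coeff (det (const_poly_mat y + H)) CARD('n) = d" and "d \<noteq> 0"
  shows "eval_poly_mat H l = mat_smult l (eval_poly_mat H 1)"
proof -
  define N where "N = (\<chi> i j. synthetic_div (H$i$j) 0)"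
  have H_eq: "H = (\<chi> i j. monom 1 1 * N$i$j)"
  proof -
    have "poly (H$i$j) 0 = 0" for i j
      using arg_cong[OF assms(4), of "\<lambda>M. M$i$j"] by (simp add: eval_poly_mat_def)
    then have "H$i$j = monom 1 1 * N$i$j" for i j
      using synthetic_div_correct'[of 0 "H$i$j"] by (simp add: N_def monom_Suc)
    then show ?thesis by (simp add: vec_eq_iff)
  qed
  have eval_H: "eval_poly_mat H t = mat_smult t (eval_poly_mat N t)" for t
    by (simp add: H_eq eval_poly_mat_def mat_smult_def poly_monom)
  have "det H = monom 1 CARD('n) * det N"
    unfolding H_eq det_scale by (simp add: monom_power)
  then have coeff_N: "coeff (det N) m = coeff (det H) (CARD('n) + m)" for m
    by (simp add: coeff_monom_mult)
  have "degree (det H) \<le> CARD('n)" "coeff (det H) CARD('n) = d"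
    using assms(6,7)[OF Qn_zero] by (simp_all add: const_poly_mat_def zero_vec_def[symmetric])
  then have "det N = [:d:]"
    by (intro poly_eqI) (auto simp: coeff_N coeff_pCons coeff_eq_0 split: nat.split)
  then have det_N: "det (eval_poly_mat N t) = d" for t
    by (metis poly_det poly_pCons poly_0 mult_zero_right add_0_right)
  have N_Qn: "eval_poly_mat N t \<in> Qn" if "t \<noteq> 0" for t
    using Qn_mat_smult[OF assms(5), of "1 / t" t] that by (simp add: eval_H mat_smult_mat_smult mat_smult_1)
  have "eval_poly_mat N l = eval_poly_mat N 1" if "l \<noteq> 0"
  proof (rule Qn_eq_by_det_deriv[OF assms(1-3) N_Qn[OF that] N_Qn])
    fix X :: "'a^'n^'n" assume "X \<in> Qn"
    have card: "infinite (UNIV::'a set) \<or> CARD('n) + 1 \<le> CARD('a)" using assms(3) by auto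
    show "det_deriv X (eval_poly_mat N l) = det_deriv X (eval_poly_mat N 1)"
      using det_deriv_const_along_curve[OF H_eq card assms(6,7) \<open>X \<in> Qn\<close>] by metis
  qed (use det_N assms(8) in simp_all)
  then show ?thesis
    by (cases "l = 0") (simp_all add: eval_H assms(4) mat_smult_0 mat_smult_1)
qed

section \<open>Maps with \<open>det (\<phi> x + \<psi> y) = det (x + y)\<close>\<close>

text \<open>Separately affine in \<open>x\<close> and \<open>y\<close> means \<open>\<alpha> + \<beta> x + \<gamma> y + \<delta> x y\<close>; affinity along the
  line through the origin in direction \<open>(1, k)\<close> forces \<open>\<delta> = 0\<close>.\<close>
lemma affine_if_affine_in_three_directions:
  fixes a :: "'a::field \<Rightarrow> 'a \<Rightarrow> 'a"
  assumes "\<And>x y. a x y = a 0 y + x * (a 1 y - a 0 y)"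
    and "\<And>x y. a x y = a x 0 + y * (a x 1 - a x 0)"
    and "a (-1) (-k) + a 1 k = 2 * a 0 0" and "k \<noteq> 0" "(2::'a) \<noteq> 0"
  shows "a x y = a 0 0 + x * (a 1 0 - a 0 0) + y * (a 0 1 - a 0 0)"
proof -
  define \<delta> where "\<delta> = a 1 1 - a 1 0 - a 0 1 + a 0 0"
  have bilinear: "a x y = a 0 0 + x * (a 1 0 - a 0 0) + y * (a 0 1 - a 0 0) + x * y * \<delta>" for x y
  proof -
    have "a x y = a 0 y + x * (a 1 y - a 0 y)" by (rule assms(1))
    also have "a 0 y = a 0 0 + y * (a 0 1 - a 0 0)" by (rule assms(2))
    also have "a 1 y = a 1 0 + y * (a 1 1 - a 1 0)" by (rule assms(2))
    finally show ?thesis unfolding \<delta>_def by (simp add: algebra_simps)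
  qed
  have "2 * k * \<delta> = 0"
    using assms(3) bilinear[of "-1" "-k"] bilinear[of 1 k] by (simp add: algebra_simps)
  then have "\<delta> = 0" using assms(4,5) by simp
  then show ?thesis using bilinear[of x y] by simp
qed

lemma mat_affine_if_affine_in_three_directions:
  fixes F :: "'a::field \<Rightarrow> 'a \<Rightarrow> 'a^'n^'m"
  assumes "\<And>x y. F x y = F 0 y + mat_smult x (F 1 y - F 0 y)"
    and "\<And>x y. F x y = F x 0 + mat_smult y (F x 1 - F x 0)"
    and "F (-1) (-k) + F 1 k = F 0 0 + F 0 0" and "k \<noteq> 0" "(2::'a) \<noteq> 0"
  shows "F x y = F 0 0 + mat_smult x (F 1 0 - F 0 0) + mat_smult y (F 0 1 - F 0 0)"
proof -
  have "F x y $ i $ j = F 0 0 $ i $ j + x * (F 1 0 $ i $ j - F 0 0 $ i $ j) +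
      y * (F 0 1 $ i $ j - F 0 0 $ i $ j)" for i j
  proof (rule affine_if_affine_in_three_directions[where a="\<lambda>x y. F x y $ i $ j"])
    show "F x y $ i $ j = F 0 y $ i $ j + x * (F 1 y $ i $ j - F 0 y $ i $ j)" for x y
      by (subst assms(1)) (simp add: mat_smult_def)
    show "F x y $ i $ j = F x 0 $ i $ j + y * (F x 1 $ i $ j - F x 0 $ i $ j)" for x y
      by (subst assms(2)) (simp add: mat_smult_def)
    show "F (-1) (-k) $ i $ j + F 1 k $ i $ j = 2 * F 0 0 $ i $ j"
      using arg_cong[OF assms(3), of "\<lambda>M. M $ i $ j"] by simp
  qed (use assms(4,5) in simp_all)
  then show ?thesis by (simp add: mat_smult_def vec_eq_iff)
qed

locale det_preserving_pair =
  fixes \<phi> \<psi> :: "'a::field^'n^'n \<Rightarrow> 'a^'n^'n"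
  assumes n_even: "even CARD('n)"
    and char_not_2: "(2::'a) \<noteq> 0"
    and field_size: "infinite (UNIV :: 'a set) \<or> card (UNIV :: 'a set) \<ge> CARD('n)^2 + 1"
    and phi_maps: "\<forall>x\<in>Qn. \<phi> x \<in> Qn"
    and psi_maps: "\<forall>x\<in>Qn. \<psi> x \<in> Qn"
    and psi_surj: "\<psi> ` Qn = Qn"
    and psi_zero: "\<psi> 0 = 0"
    and det_pres: "\<forall>x\<in>Qn. \<forall>y\<in>Qn. det (\<phi> x + \<psi> y) = det (x + y)"
begin

lemma card_field_square: "infinite (UNIV::'a set) \<or> CARD('n) * CARD('n) + 1 \<le> CARD('a)"
  using field_size by (simp add: power2_eq_square)

lemma card_field: "infinite (UNIV::'a set) \<or> CARD('n) + 2 \<le> CARD('a)"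
proof -
  have "2 \<le> CARD('n)" using n_even zero_less_card_finite[where 'a='n] by presburger
  then have "2 * CARD('n) \<le> CARD('n) * CARD('n)" by simp
  then show "infinite (UNIV::'a set) \<or> CARD('n) + 2 \<le> CARD('a)"
    using card_field_square \<open>2 \<le> CARD('n)\<close> by linarith
qed

lemma psi_inj: "inj_on \<psi> Qn"
proof (rule inj_onI)
  fix y y' assume y: "y \<in> Qn" "y' \<in> Qn" "\<psi> y = \<psi> y'"
  show "y = y'"
  proof (rule Qn_eq_by_det_add[OF n_even char_not_2 card_field y(1,2)])
    fix z :: "'a^'n^'n" assume "z \<in> Qn"
    then have "det (z + y) = det (z + y')" using det_pres y by metis
    then show "det (y + z) = det (y' + z)" by (simp add: add.commute)
  qed
qed

definition psi_inv :: "'a^'n^'n \<Rightarrow> 'a^'n^'n" where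
  "psi_inv = inv_into Qn \<psi>"

lemma psi_inv_Qn: "z \<in> Qn \<Longrightarrow> psi_inv z \<in> Qn"
  unfolding psi_inv_def using psi_surj by (metis inv_into_into)

lemma psi_psi_inv: "z \<in> Qn \<Longrightarrow> \<psi> (psi_inv z) = z"
  unfolding psi_inv_def using psi_surj by (metis f_inv_into_f)

lemma psi_inv_psi: "y \<in> Qn \<Longrightarrow> psi_inv (\<psi> y) = y"
  unfolding psi_inv_def using psi_inj by (simp add: inv_into_f_f)

lemma psi_inv_0: "psi_inv 0 = 0"
  using psi_inv_psi[OF Qn_zero] psi_zero by simp

lemma det_phi_add: "x \<in> Qn \<Longrightarrow> z \<in> Qn \<Longrightarrow> det (\<phi> x + z) = det (x + psi_inv z)"
  using det_pres psi_inv_Qn psi_psi_inv by metis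

text \<open>Along a line, \<open>det (x + psi_inv z) = det (\<phi> x + z)\<close> is a polynomial of degree at most
  \<open>n\<close> in the parameter.\<close>
lemma det_combination_psi_inv_line:
  assumes "det_combination f" "u \<in> Qn" "w \<in> Qn"
  shows "\<exists>p. degree p \<le> CARD('n) \<and> (\<forall>l. poly p l = f (psi_inv (u + mat_smult l w)))"
  using assms(1)
proof (induction rule: det_combination.induct)
  case (det_translate x)
  have "det (x + psi_inv (u + mat_smult l w)) = poly (det (pencil w (\<phi> x + u))) l" for l
    using det_phi_add[OF det_translate Qn_add_mat_smult[OF assms(2,3)]] by (simp add: poly_det_pencil add.assoc)
  then show ?case using degree_det_pencil by metis
next
  case zero
  show ?case by (rule exI[of _ 0]) simp
next
  case (add f g)
  then obtain p q where "degree p \<le> CARD('n)" "degree q \<le> CARD('n)"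
    "\<forall>l. poly p l = f (psi_inv (u + mat_smult l w))" "\<forall>l. poly q l = g (psi_inv (u + mat_smult l w))"
    by blast
  then show ?case by (intro exI[of _ "p + q"]) (simp add: degree_add_le)
next
  case (scale f c)
  then obtain p where "degree p \<le> CARD('n)" "\<forall>l. poly p l = f (psi_inv (u + mat_smult l w))"
    by blast
  then show ?case by (intro exI[of _ "smult c p"]) simp
qed

lemma obtain_psi_inv_line_poly_mat:
  assumes "u \<in> Qn" "w \<in> Qn"
  obtains G :: "'a poly^'n^'n" where "\<And>i j. degree (G$i$j) \<le> CARD('n)"
    and "\<And>l. eval_poly_mat G l = psi_inv (u + mat_smult l w)"
proof -
  have "\<forall>i j. \<exists>p. degree p \<le> CARD('n) \<and> (\<forall>l. poly p l = psi_inv (u + mat_smult l w) $ i $ j)"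
  proof (intro allI)
    fix i j :: 'n
    obtain f where "det_combination f" "\<forall>W::'a^'n^'n. W \<in> Qn \<longrightarrow> W$i$j = f W"
      using entry_det_combination[OF n_even char_not_2 card_field] by blast
    then show "\<exists>p. degree p \<le> CARD('n) \<and> (\<forall>l. poly p l = psi_inv (u + mat_smult l w) $ i $ j)"
      using det_combination_psi_inv_line[OF _ assms] psi_inv_Qn[OF Qn_add_mat_smult[OF assms]] by metis
  qed
  then obtain P where "\<forall>i j. degree (P i j) \<le> CARD('n) \<and>
      (\<forall>l. poly (P i j) l = psi_inv (u + mat_smult l w) $ i $ j)"
    by metis
  then show ?thesis
    by (intro that[of "\<chi> i j. P i j"]) (simp_all add: eval_poly_mat_def vec_eq_iff)
qed

lemma det_const_add_psi_inv_line:
  assumes "u \<in> Qn" "w \<in> Qn" "y \<in> Qn" and "\<And>i j. degree (G$i$j) \<le> CARD('n)"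
    and "\<And>l. eval_poly_mat G l = psi_inv (u + mat_smult l w)"
  shows "det (const_poly_mat y + G) = det (pencil w (\<phi> y + u))"
proof (rule poly_eqI_outside[of "{}" "CARD('n) * CARD('n)"])
  show "degree (det (const_poly_mat y + G)) \<le> CARD('n) * CARD('n)"
    using assms(4) by (intro degree_det_le) (simp add: const_poly_mat_def degree_add_le)
  show "degree (det (pencil w (\<phi> y + u))) \<le> CARD('n) * CARD('n)"
    using degree_det_pencil[of w "\<phi> y + u"] le_square order.trans by blast
  fix l
  have "eval_poly_mat (const_poly_mat y + G) l = y + psi_inv (u + mat_smult l w)"
    using assms(5) by (simp add: eval_poly_mat_def const_poly_mat_def vec_eq_iff)
  then have "poly (det (const_poly_mat y + G)) l = det (y + psi_inv (u + mat_smult l w))"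
    by (simp add: poly_det)
  also have "\<dots> = poly (det (pencil w (\<phi> y + u))) l"
    using det_phi_add[OF assms(3) Qn_add_mat_smult[OF assms(1,2)]] by (simp add: poly_det_pencil add.assoc)
  finally show "poly (det (const_poly_mat y + G)) l = poly (det (pencil w (\<phi> y + u))) l" .
qed (use card_field_square in simp_all)

lemma psi_inv_line:
  assumes "u \<in> Qn" "w \<in> Qn" "det w \<noteq> 0"
  shows "psi_inv (u + mat_smult l w) = psi_inv u + mat_smult l (psi_inv (u + w) - psi_inv u)"
proof -
  obtain G where G: "\<And>i j. degree (G$i$j) \<le> CARD('n)"
    "\<And>l. eval_poly_mat G l = psi_inv (u + mat_smult l w)"
    using obtain_psi_inv_line_poly_mat[OF assms(1,2)] by blast
  define C where "C = psi_inv u"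
  define H where "H = G - const_poly_mat C"
  have eval_H: "eval_poly_mat H t = psi_inv (u + mat_smult t w) - C" for t
    by (simp add: H_def G(2)[symmetric] eval_poly_mat_def const_poly_mat_def vec_eq_iff)
  have det_H: "det (const_poly_mat y + H) = det (pencil w (\<phi> (y - C) + u))" if "y \<in> Qn" for y
  proof -
    have "const_poly_mat y + H = const_poly_mat (y - C) + G"
      by (simp add: H_def const_poly_mat_def vec_eq_iff)
    then show ?thesis
      using det_const_add_psi_inv_line[OF assms(1,2) _ G] Qn_diff[OF that psi_inv_Qn[OF assms(1)]]
      by (simp add: C_def)
  qed
  have "eval_poly_mat H l = mat_smult l (eval_poly_mat H 1)"
  proof (rule poly_curve_is_line[OF n_even char_not_2 card_field])
    show "eval_poly_mat H 0 = 0" by (simp add: eval_H C_def mat_smult_0)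
    show "eval_poly_mat H t \<in> Qn" for t
      unfolding eval_H C_def using assms(1,2) by (intro Qn_diff psi_inv_Qn Qn_add_mat_smult)
    show "degree (det (const_poly_mat y + H)) \<le> CARD('n)" if "y \<in> Qn" for y
      unfolding det_H[OF that] by (rule degree_det_pencil)
    show "coeff (det (const_poly_mat y + H)) CARD('n) = det w" if "y \<in> Qn" for y
      unfolding det_H[OF that] by (rule coeff_det_pencil_top)
  qed (rule assms(3))
  then show ?thesis by (simp add: eval_H C_def mat_smult_1 algebra_simps)
qed

lemma psi_inv_plane:
  assumes "w1 \<in> Qn" "det w1 \<noteq> 0" "w2 \<in> Qn" "det w2 \<noteq> 0"
  shows "psi_inv (mat_smult s w1 + mat_smult t w2) = mat_smult s (psi_inv w1) + mat_smult t (psi_inv w2)"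
proof -
  obtain k where k: "k \<noteq> 0" "det (w1 + mat_smult k w2) \<noteq> 0"
    using exists_invertible_in_pencil[OF card_field] assms(2) by blast
  define F where "F x y = psi_inv (mat_smult x w1 + mat_smult y w2)" for x y
  have F_00: "F 0 0 = 0" by (simp add: F_def mat_smult_0 psi_inv_0)
  define w3 where "w3 = w1 + mat_smult k w2"
  have "w3 \<in> Qn" unfolding w3_def using assms(1,3) by (rule Qn_add_mat_smult)
  have "F (-1) (-k) = psi_inv (0 + mat_smult (-1) w3)"
    unfolding F_def w3_def by (rule arg_cong[where f=psi_inv]) (simp add: mat_smult_def vec_eq_iff)
  moreover have "F 1 k = psi_inv (0 + w3)"
    unfolding F_def w3_def by (simp add: mat_smult_1)
  ultimately have diagonal: "F (-1) (-k) + F 1 k = F 0 0 + F 0 0"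
    using psi_inv_line[OF Qn_zero \<open>w3 \<in> Qn\<close> k(2)[folded w3_def], of "-1"]
    by (simp add: F_00 psi_inv_0 mat_smult_def vec_eq_iff)
  have "F s t = F 0 0 + mat_smult s (F 1 0 - F 0 0) + mat_smult t (F 0 1 - F 0 0)"
  proof (rule mat_affine_if_affine_in_three_directions[OF _ _ diagonal k(1) char_not_2])
    show "F x y = F 0 y + mat_smult x (F 1 y - F 0 y)" for x y
      using psi_inv_line[OF Qn_mat_smult[OF assms(3)] assms(1,2), of y x]
      by (simp add: F_def add.commute mat_smult_0 mat_smult_1)
    show "F x y = F x 0 + mat_smult y (F x 1 - F x 0)" for x y
      using psi_inv_line[OF Qn_mat_smult[OF assms(1)] assms(3,4), of x y]
      by (simp add: F_def mat_smult_0 mat_smult_1)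
  qed
  then show ?thesis by (simp add: F_def mat_smult_0 mat_smult_1 psi_inv_0)
qed

lemma psi_inv_shift:
  assumes "J \<in> Qn" "det J \<noteq> 0" "a \<in> Qn"
  shows "psi_inv (a + mat_smult c J) = psi_inv a + mat_smult c (psi_inv J)"
proof -
  obtain d where d: "det (a + mat_smult d J) \<noteq> 0"
    using exists_invertible_in_pencil[OF card_field] assms(2) by blast
  define w where "w = a + mat_smult d J"
  have w: "w \<in> Qn" "det w \<noteq> 0" unfolding w_def using Qn_add_mat_smult[OF assms(3,1)] d by simp_all
  have "a + mat_smult c J = mat_smult 1 w + mat_smult (c - d) J"
    by (simp add: w_def mat_smult_def vec_eq_iff algebra_simps)
  then have "psi_inv (a + mat_smult c J) = mat_smult 1 (psi_inv w) + mat_smult (c - d) (psi_inv J)"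
    by (simp only: psi_inv_plane[OF w assms(1,2)])
  moreover have "a = mat_smult 1 w + mat_smult (- d) J"
    by (simp add: w_def mat_smult_def vec_eq_iff algebra_simps)
  then have "psi_inv a = mat_smult 1 (psi_inv w) + mat_smult (- d) (psi_inv J)"
    by (simp only: psi_inv_plane[OF w assms(1,2)])
  ultimately have "psi_inv (a + mat_smult c J) - psi_inv a =
      mat_smult (c - d) (psi_inv J) - mat_smult (- d) (psi_inv J)"
    by simp
  also have "\<dots> = mat_smult c (psi_inv J)" by (simp add: mat_smult_def vec_eq_iff algebra_simps)
  finally show ?thesis by (simp add: algebra_simps)
qed

lemma psi_inv_mat_smult:
  assumes "a \<in> Qn"
  shows "psi_inv (mat_smult \<mu> a) = mat_smult \<mu> (psi_inv a)"
proof -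
  obtain J :: "'a^'n^'n" where J: "J \<in> Qn" "det J \<noteq> 0"
    using obtain_invertible_skew[OF n_even] by blast
  obtain d where d: "det (a + mat_smult d J) \<noteq> 0"
    using exists_invertible_in_pencil[OF card_field] J(2) by blast
  define w where "w = a + mat_smult d J"
  have w: "w \<in> Qn" "det w \<noteq> 0" unfolding w_def using Qn_add_mat_smult[OF assms J(1)] d by simp_all
  have "mat_smult \<mu> a = mat_smult \<mu> w + mat_smult (- \<mu> * d) J"
    by (simp add: w_def mat_smult_def vec_eq_iff algebra_simps)
  then have "psi_inv (mat_smult \<mu> a) = mat_smult \<mu> (psi_inv w) + mat_smult (- \<mu> * d) (psi_inv J)"
    by (simp only: psi_inv_plane[OF w J])
  also have "psi_inv w = psi_inv a + mat_smult d (psi_inv J)"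
    unfolding w_def by (rule psi_inv_shift[OF J assms])
  finally show ?thesis by (simp add: mat_smult_def vec_eq_iff algebra_simps)
qed

lemma psi_inv_add:
  assumes "a \<in> Qn" "b \<in> Qn"
  shows "psi_inv (a + b) = psi_inv a + psi_inv b"
proof -
  obtain J :: "'a^'n^'n" where J: "J \<in> Qn" "det J \<noteq> 0"
    using obtain_invertible_skew[OF n_even] by blast
  obtain c d where cd: "det (a + mat_smult c J) \<noteq> 0" "det (b + mat_smult d J) \<noteq> 0"
    using exists_invertible_in_pencil[OF card_field] J(2) by metis
  define wa wb where "wa = a + mat_smult c J" and "wb = b + mat_smult d J"
  have w: "wa \<in> Qn" "det wa \<noteq> 0" "wb \<in> Qn" "det wb \<noteq> 0"
    unfolding wa_def wb_def using Qn_add_mat_smult[OF assms(1) J(1)] Qn_add_mat_smult[OF assms(2) J(1)] cd by simp_all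
  have "a + b = (mat_smult 1 wa + mat_smult 1 wb) + mat_smult (- (c + d)) J"
    by (simp add: wa_def wb_def mat_smult_def vec_eq_iff algebra_simps)
  then have "psi_inv (a + b) = psi_inv (mat_smult 1 wa + mat_smult 1 wb) + mat_smult (- (c + d)) (psi_inv J)"
    using psi_inv_shift[OF J Qn_add[OF w(1,3)]] by (simp add: mat_smult_1)
  also have "psi_inv (mat_smult 1 wa + mat_smult 1 wb) = psi_inv wa + psi_inv wb"
    using psi_inv_plane[OF w, of 1 1] unfolding mat_smult_1 .
  also have "psi_inv wa = psi_inv a + mat_smult c (psi_inv J)"
    unfolding wa_def by (rule psi_inv_shift[OF J assms(1)])
  also have "psi_inv wb = psi_inv b + mat_smult d (psi_inv J)"
    unfolding wb_def by (rule psi_inv_shift[OF J assms(2)])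
  finally show ?thesis by (simp add: mat_smult_def vec_eq_iff algebra_simps)
qed

lemma psi_add:
  assumes "x \<in> Qn" "y \<in> Qn"
  shows "\<psi> (x + y) = \<psi> x + \<psi> y"
proof -
  have "\<psi> x \<in> Qn" "\<psi> y \<in> Qn" using psi_maps assms by auto
  then have "psi_inv (\<psi> x + \<psi> y) = x + y" using psi_inv_add psi_inv_psi assms by simp
  then show ?thesis using psi_psi_inv[OF Qn_add[OF \<open>\<psi> x \<in> Qn\<close> \<open>\<psi> y \<in> Qn\<close>]] by metis
qed

lemma psi_mat_smult:
  assumes "x \<in> Qn"
  shows "\<psi> (mat_smult c x) = mat_smult c (\<psi> x)"
proof -
  have "\<psi> x \<in> Qn" using psi_maps assms by auto
  then have "psi_inv (mat_smult c (\<psi> x)) = mat_smult c x" using psi_inv_mat_smult psi_inv_psi assms by simp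
  then show ?thesis using psi_psi_inv[OF Qn_mat_smult[OF \<open>\<psi> x \<in> Qn\<close>]] by metis
qed

lemma phi_0: "\<phi> 0 = 0"
proof (rule Qn_eq_by_det_add[OF n_even char_not_2 card_field])
  show "\<phi> 0 \<in> Qn" using phi_maps Qn_zero by blast
  fix z :: "'a^'n^'n" assume z: "z \<in> Qn"
  have "det (z + mat_smult \<mu> (\<phi> 0)) = det (\<phi> 0 + z)" if "\<mu> \<noteq> 0" for \<mu>
  proof -
    have "z + mat_smult \<mu> (\<phi> 0) = mat_smult \<mu> (\<phi> 0 + mat_smult (1 / \<mu>) z)"
      using that by (simp add: mat_smult_def vec_eq_iff field_simps)
    then have "det (z + mat_smult \<mu> (\<phi> 0)) = \<mu> ^ CARD('n) * det (psi_inv (mat_smult (1 / \<mu>) z))"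
      using det_phi_add[OF Qn_zero Qn_mat_smult[OF z]] by (simp add: det_mat_smult)
    also have "\<dots> = det (psi_inv z)"
      using that by (simp add: psi_inv_mat_smult[OF z] det_mat_smult power_one_over)
    finally show ?thesis using det_phi_add[OF Qn_zero z] by simp
  qed
  \<comment> \<open>so \<open>\<mu> \<mapsto> det (z + \<mu> \<phi> 0)\<close> is constant; compare its values at \<open>0\<close> and \<open>1\<close>\<close>
  then have "det (pencil (\<phi> 0) z) = [:det (\<phi> 0 + z):]"
    using degree_det_pencil[of "\<phi> 0" z] card_field
    by (intro poly_eqI_outside[of "{0}" "CARD('n)"]) (auto simp: poly_det_pencil)
  then show "det (\<phi> 0 + z) = det (0 + z)"
    using poly_det_pencil[of "\<phi> 0" z 0] by (simp add: mat_smult_0)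
qed (rule Qn_zero)

lemma phi_eq_psi:
  assumes "x \<in> Qn"
  shows "\<phi> x = \<psi> x"
proof -
  have "\<phi> x - \<psi> x = \<phi> 0"
  proof (rule Qn_eq_by_det_add[OF n_even char_not_2 card_field])
    show "\<phi> x - \<psi> x \<in> Qn" "\<phi> 0 \<in> Qn" using phi_maps psi_maps assms Qn_zero by (auto intro: Qn_diff)
    fix z :: "'a^'n^'n" assume z: "z \<in> Qn"
    define y where "y = psi_inv z - x"
    have y: "y \<in> Qn" unfolding y_def using psi_inv_Qn[OF z] assms by (rule Qn_diff)
    have "\<psi> y + \<psi> x = z" using psi_add[OF y assms] psi_psi_inv[OF z] by (simp add: y_def)
    then have "\<phi> x - \<psi> x + z = \<phi> x + \<psi> y" by (simp add: algebra_simps)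
    then have "det (\<phi> x - \<psi> x + z) = det (x + y)" using det_pres assms y by metis
    also have "\<dots> = det (\<phi> 0 + z)" using det_phi_add[OF Qn_zero z] by (simp add: y_def)
    finally show "det (\<phi> x - \<psi> x + z) = det (\<phi> 0 + z)" .
  qed
  then show ?thesis using phi_0 by simp
qed

end

theorem theorem1p4:
  fixes \<phi> \<psi> :: "'a::field^'n^'n \<Rightarrow> 'a^'n^'n"
  assumes n_even: "even CARD('n)"
    and char_not_2: "(2::'a) \<noteq> 0"
    and field_size: "infinite (UNIV :: 'a set) \<or> card (UNIV :: 'a set) \<ge> CARD('n)^2 + 1"
    and phi_maps: "\<forall>x\<in>Qn. \<phi> x \<in> Qn"
    and psi_maps: "\<forall>x\<in>Qn. \<psi> x \<in> Qn"
    and psi_surj: "\<psi> ` Qn = Qn"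
    and psi_zero: "\<psi> 0 = 0"
    and det_pres: "\<forall>x\<in>Qn. \<forall>y\<in>Qn. det (\<phi> x + \<psi> y) = det (x + y)"
  shows "(\<forall>x\<in>Qn. \<phi> x = \<psi> x) \<and> bij_betw \<psi> Qn Qn \<and> linear_on_Qn \<psi>
         \<and> (\<forall>x\<in>Qn. det (\<psi> x) = det x)"
proof -
  interpret det_preserving_pair \<phi> \<psi>
    by (rule det_preserving_pair.intro) (fact assms)+
  have "det (\<psi> x) = det x" if "x \<in> Qn" for x
    using det_pres that Qn_zero phi_eq_psi[OF that] psi_zero by fastforce
  then show ?thesis
    using phi_eq_psi psi_inj psi_surj psi_add psi_mat_smult
    by (simp add: bij_betw_def linear_on_Qn_def)
qed

end
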